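(* Consider a controllability network as in the context, with fixed graph, scheduling, quantization parameters $U_{\max}>0$, $\delta_u>0$, slot duration $\Delta>0$, and a rate bound $\bar R_e$ for a link $e\in E_R$. There is a constant $\kappa_e\ge0$ (depending only on $\bar R_e,\Delta,U_{\max},\delta_u$) such that for every weight vector $\mathbf w_R$ for which $\alpha_{\bar e}\neq0$ for all $\bar e\in E_R$, one has $R_e\le\bar R_e$ if and only if $|\alpha_e|-\kappa_e|\alpha_{\bar e}|\le0$ for all $\bar e\in E_R$; each $\alpha_{\bar e}$ is a polynomial in the entries of $\mathbf w_R$, so that the rate constraint $R_e\le\bar R_e$ is a polynomial constraint in $\mathbf w_R$. The analogous statement holds for links of the observability network (with $Y_{\max},\delta_y$ and $\mathbf w_O$).
   Context: The controllability network is an acyclic directed graph $(V_R,E_R)$ with controller node $v_c$ and actuator node $v_u$, and weight function $W_R:E_R\to\mathbb R$; $\mathbf w_R=(W_R(e))_{e\in E_R}$. For a directed path, its weight is the product of the weights of its edges. Computational model 1: each node sums the data received on incoming links and transmits on each outgoing link the sum multiplied by that link's weight. For a link $e=(v,v')\in E_R$, $\alpha_e$ is the sum of the weights of all directed paths that start at $v_c$ and end with the link $e$. Actuation data are quantized with width $\delta_u$ over the range $[-U_{\max},U_{\max}]$, and each link transmits during a time slot of duration $\Delta$; the data rate of link $e$ is $$R_e=\Delta^{-1}\left\lceil \log_2\left(\frac{2U_{\max}}{\delta_u}\cdot\frac{|\alpha_e|}{\min_{\bar e\in E_R}|\alpha_{\bar e}|}\right)\right\rceil .$$ The observability network $(V_O,E_O)$,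 with sensor node as source, weights $W_O$, $\mathbf w_O$, quantization parameters $\delta_y$, $Y_{\max}$, and quantities $\alpha_e,R_e$ for $e\in E_O$, is defined analogously. *)

theory Defs
  imports Complex_Main
begin

text \<open>A network is a finite set of directed links E (pairs of nodes) with a
source node (controller v_c, resp. sensor) and a weight function W on links.\<close>

definition src_path :: "('v \<times> 'v) set \<Rightarrow> 'v \<Rightarrow> ('v \<times> 'v) list \<Rightarrow> bool" where
  "src_path E s es \<longleftrightarrow> es \<noteq> [] \<and> set es \<subseteq> E \<and> fst (hd es) = s \<and>
     (\<forall>i. Suc i < length es \<longrightarrow> snd (es ! i) = fst (es ! Suc i))"

definition alpha :: "('v \<times> 'v) set \<Rightarrow> 'v \<Rightarrow> ('v \<times> 'v \<Rightarrow> real) \<Rightarrow> 'v \<times> 'v \<Rightarrow> real" where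
  "alpha E s W e = (\<Sum>es \<in> {es. src_path E s es \<and> last es = e}. prod_list (map W es))"

definition rate :: "('v \<times> 'v) set \<Rightarrow> 'v \<Rightarrow> ('v \<times> 'v \<Rightarrow> real) \<Rightarrow> real \<Rightarrow> real \<Rightarrow> real
    \<Rightarrow> 'v \<times> 'v \<Rightarrow> real" where
  "rate E s W Vmax dq Dt e =
     (1 / Dt) * real_of_int \<lceil>log 2 ((2 * Vmax / dq) * (\<bar>alpha E s W e\<bar> /
        Min ((\<lambda>e'. \<bar>alpha E s W e'\<bar>) ` E)))\<rceil>"

end

theory Submission
  imports Defs
begin

text \<open>An integer ceiling \<open>\<lceil>log 2 x\<rceil>\<close> is at most \<open>R \<Delta>\<close> exactly when \<open>x \<le> 2 powr \<lfloor>R \<Delta>\<rfloor>\<close>.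
Taking \<open>x = (2 Vmax / dq) |\<alpha> e| / min |\<alpha>|\<close> and clearing the positive denominators turns
the rate constraint into \<open>|\<alpha> e| \<le> \<kappa> min |\<alpha>|\<close> with \<open>\<kappa> = 2 powr \<lfloor>R \<Delta>\<rfloor> / (2 Vmax / dq)\<close>,
and a bound by a minimum is a bound by each element.\<close>

lemma ceiling_log_div_le_iff:
  fixes x Dt R :: real
  assumes "x > 0" and "Dt > 0"
  shows "real_of_int \<lceil>log 2 x\<rceil> / Dt \<le> R \<longleftrightarrow> x \<le> 2 powr real_of_int \<lfloor>R * Dt\<rfloor>"
proof -
  have "real_of_int \<lceil>log 2 x\<rceil> / Dt \<le> R \<longleftrightarrow> real_of_int \<lceil>log 2 x\<rceil> \<le> R * Dt"
    using \<open>Dt > 0\<close> by (simp add: pos_divide_le_eq)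
  also have "\<dots> \<longleftrightarrow> \<lceil>log 2 x\<rceil> \<le> \<lfloor>R * Dt\<rfloor>"
    by (simp add: le_floor_iff)
  also have "\<dots> \<longleftrightarrow> log 2 x \<le> real_of_int \<lfloor>R * Dt\<rfloor>"
    by (simp add: ceiling_le_iff)
  also have "\<dots> \<longleftrightarrow> x \<le> 2 powr real_of_int \<lfloor>R * Dt\<rfloor>"
    using \<open>x > 0\<close> by (simp add: log_le_iff)
  finally show ?thesis .
qed

lemma le_mult_Min_iff:
  fixes f :: "'a \<Rightarrow> 'b::linordered_idom"
  assumes "finite A" "A \<noteq> {}" "k \<ge> 0"
  shows "a \<le> k * Min (f ` A) \<longleftrightarrow> (\<forall>x\<in>A. a - k * f x \<le> 0)"
proof
  assume bound: "a \<le> k * Min (f ` A)"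
  show "\<forall>x\<in>A. a - k * f x \<le> 0"
  proof
    fix x assume "x \<in> A"
    then have "k * Min (f ` A) \<le> k * f x"
      using assms by (intro mult_left_mono) auto
    then show "a - k * f x \<le> 0" using bound by simp
  qed
next
  assume "\<forall>x\<in>A. a - k * f x \<le> 0"
  moreover have "Min (f ` A) \<in> f ` A"
    using assms by (intro Min_in) auto
  ultimately show "a \<le> k * Min (f ` A)" by force
qed

definition rate_threshold :: "real \<Rightarrow> real \<Rightarrow> real \<Rightarrow> real \<Rightarrow> real" where
  "rate_threshold Rbar Dt Vmax dq = 2 powr real_of_int \<lfloor>Rbar * Dt\<rfloor> / (2 * Vmax / dq)"

lemma rate_threshold_nonneg: "Vmax > 0 \<Longrightarrow> dq > 0 \<Longrightarrow> rate_threshold Rbar Dt Vmax dq \<ge> 0"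
  by (simp add: rate_threshold_def)

lemma rate_le_iff_alpha_bounded:
  assumes "Dt > 0" "Vmax > 0" "dq > 0"
    and "finite E" "e \<in> E" and nonzero: "\<forall>e'\<in>E. alpha E s W e' \<noteq> 0"
  shows "rate E s W Vmax dq Dt e \<le> Rbar \<longleftrightarrow>
     (\<forall>e'\<in>E. \<bar>alpha E s W e\<bar> - rate_threshold Rbar Dt Vmax dq * \<bar>alpha E s W e'\<bar> \<le> 0)"
proof -
  define c where "c = 2 * Vmax / dq"
  define a where "a = \<bar>alpha E s W e\<bar>"
  define m where "m = Min ((\<lambda>e'. \<bar>alpha E s W e'\<bar>) ` E)"
  have "c > 0" using assms by (simp add: c_def)
  have "a > 0" using nonzero \<open>e \<in> E\<close> by (simp add: a_def)
  have "m \<in> (\<lambda>e'. \<bar>alpha E s W e'\<bar>) ` E"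
    unfolding m_def using \<open>finite E\<close> \<open>e \<in> E\<close> by (intro Min_in) auto
  then have "m > 0" using nonzero by auto
  have "rate E s W Vmax dq Dt e \<le> Rbar \<longleftrightarrow> c * (a / m) \<le> 2 powr real_of_int \<lfloor>Rbar * Dt\<rfloor>"
    unfolding rate_def c_def[symmetric] a_def[symmetric] m_def[symmetric]
    using ceiling_log_div_le_iff[of "c * (a / m)" Dt Rbar] \<open>c > 0\<close> \<open>a > 0\<close> \<open>m > 0\<close> \<open>Dt > 0\<close>
    by simp
  also have "\<dots> \<longleftrightarrow> a \<le> rate_threshold Rbar Dt Vmax dq * m"
    unfolding rate_threshold_def c_def[symmetric]
    using \<open>c > 0\<close> \<open>m > 0\<close> by (simp add: pos_divide_le_eq pos_le_divide_eq ac_simps)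
  also have "\<dots> \<longleftrightarrow> (\<forall>e'\<in>E. a - rate_threshold Rbar Dt Vmax dq * \<bar>alpha E s W e'\<bar> \<le> 0)"
    unfolding m_def using assms rate_threshold_nonneg by (intro le_mult_Min_iff) auto
  finally show ?thesis unfolding a_def .
qed

theorem proposition4:
  shows "\<exists>\<kappa> :: real \<Rightarrow> real \<Rightarrow> real \<Rightarrow> real \<Rightarrow> real.
    \<forall>Rbar Dt Vmax dq. Dt > 0 \<and> Vmax > 0 \<and> dq > 0 \<longrightarrow>
      \<kappa> Rbar Dt Vmax dq \<ge> 0 \<and>
      (\<forall>(E :: ('v \<times> 'v) set) s (W :: 'v \<times> 'v \<Rightarrow> real) e.
         finite E \<and> acyclic E \<and> e \<in> E \<and> (\<forall>e'\<in>E. alpha E s W e' \<noteq> 0) \<longrightarrow>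
         (rate E s W Vmax dq Dt e \<le> Rbar \<longleftrightarrow>
            (\<forall>e'\<in>E. \<bar>alpha E s W e\<bar> - \<kappa> Rbar Dt Vmax dq * \<bar>alpha E s W e'\<bar> \<le> 0)))"
proof (intro exI[of _ rate_threshold] allI impI conjI)
  fix Rbar Dt Vmax dq :: real
  assume "Dt > 0 \<and> Vmax > 0 \<and> dq > 0"
  then show "rate_threshold Rbar Dt Vmax dq \<ge> 0"
    by (simp add: rate_threshold_nonneg)
  fix E :: "('v \<times> 'v) set" and s W e
  assume "finite E \<and> acyclic E \<and> e \<in> E \<and> (\<forall>e'\<in>E. alpha E s W e' \<noteq> 0)"
  with \<open>Dt > 0 \<and> Vmax > 0 \<and> dq > 0\<close> show "rate E s W Vmax dq Dt e \<le> Rbar \<longleftrightarrow>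
     (\<forall>e'\<in>E. \<bar>alpha E s W e\<bar> - rate_threshold Rbar Dt Vmax dq * \<bar>alpha E s W e'\<bar> \<le> 0)"
    by (intro rate_le_iff_alpha_bounded) auto
qed

end
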